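(* Let $(X,d,\kappa)$ be a complete digital metric space, and assume either that $X$ is finite or that $d$ is an $\ell_p$ metric for some $1\le p\le\infty$. Let $T:X\to X$ be a bijective generalized $\alpha$-$\psi$-expansive mapping (with associated $\alpha:X\times X\to[0,\infty)$ and $\psi\in\Psi$) such that (1) $T^{-1}$ is $\alpha$-admissible, and (2) there exists $x_0\in X$ such that $\alpha(x_0,T^{-1}(x_0))\ge 1$. Then $T$ has a fixed point.
   Context: A digital metric space is a triple $(X,d,\kappa)$ where $X\subset\mathbb{Z}^n$ for some positive integer $n$, $\kappa$ is an adjacency relation on $X$, and $d$ is a metric on $X$. The $\ell_p$ metric on $\mathbb{Z}^n$ is $d(x,y)=(\sum_i|x_i-y_i|^p)^{1/p}$ for $1\le p<\infty$ and $\max_i|x_i-y_i|$ for $p=\infty$. $\Psi$ is the set of nondecreasing functions $\psi:[0,\infty)\to[0,\infty)$ with $\sum_{n=1}^\infty\psi^n(t)<\infty$ for all $t>0$ ($\psi^n$ the $n$-fold composition). A map $R:X\to X$ is $\alpha$-admissible (for $\alpha:X\times X\to[0,\infty)$) if $\alpha(x,y)\ge1$ implies $\alpha(R(x),R(y))\ge1$. $T$ is a generalized $\alpha$-$\psi$-expansive mapping if there exist $\alpha:X\times X\to[0,\infty)$ and $\psi\in\Psi$ such that for all $x,y\in X$, $\psi(d(T(x),T(y)))\ge\alpha(x,y)M(x,y)$, where $M(x,y)=\max\{d(x,y),\ \tfrac{d(x,T(x))+d(y,T(y))}{2},\ \tfrac{d(x,T(y))+d(y,T(x))}{2}\}$.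 *)

theory Defs
  imports "HOL-Analysis.Analysis"
begin

text \<open>Points of \<open>\<int>\<^sup>n\<close> are vectors \<open>int ^ 'n\<close>; the dimension n = CARD('n) \<ge> 1.\<close>

definition is_metric_on :: "'a set \<Rightarrow> ('a \<Rightarrow> 'a \<Rightarrow> real) \<Rightarrow> bool" where
  "is_metric_on X d \<longleftrightarrow>
     (\<forall>x\<in>X. \<forall>y\<in>X. d x y \<ge> 0) \<and>
     (\<forall>x\<in>X. \<forall>y\<in>X. d x y = 0 \<longleftrightarrow> x = y) \<and>
     (\<forall>x\<in>X. \<forall>y\<in>X. d x y = d y x) \<and>
     (\<forall>x\<in>X. \<forall>y\<in>X. \<forall>z\<in>X. d x z \<le> d x y + d y z)"

definition is_adjacency_on :: "'a set \<Rightarrow> ('a \<Rightarrow> 'a \<Rightarrow> bool) \<Rightarrow> bool" where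
  "is_adjacency_on X \<kappa> \<longleftrightarrow>
     (\<forall>x\<in>X. \<not> \<kappa> x x) \<and> (\<forall>x\<in>X. \<forall>y\<in>X. \<kappa> x y \<longrightarrow> \<kappa> y x)"

definition digital_metric_space ::
  "(int ^ 'n) set \<Rightarrow> (int ^ 'n \<Rightarrow> int ^ 'n \<Rightarrow> real) \<Rightarrow> (int ^ 'n \<Rightarrow> int ^ 'n \<Rightarrow> bool) \<Rightarrow> bool" where
  "digital_metric_space X d \<kappa> \<longleftrightarrow> is_metric_on X d \<and> is_adjacency_on X \<kappa>"

definition d_Cauchy :: "'a set \<Rightarrow> ('a \<Rightarrow> 'a \<Rightarrow> real) \<Rightarrow> (nat \<Rightarrow> 'a) \<Rightarrow> bool" where
  "d_Cauchy X d s \<longleftrightarrow> (\<forall>e>0. \<exists>N. \<forall>m\<ge>N. \<forall>n\<ge>N. d (s m) (s n) < e)"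

definition d_complete :: "'a set \<Rightarrow> ('a \<Rightarrow> 'a \<Rightarrow> real) \<Rightarrow> bool" where
  "d_complete X d \<longleftrightarrow>
     (\<forall>s. (\<forall>k. s k \<in> X) \<and> d_Cauchy X d s \<longrightarrow> (\<exists>L\<in>X. (\<lambda>k. d (s k) L) \<longlonglongrightarrow> 0))"

definition lp_dist :: "real \<Rightarrow> int ^ 'n \<Rightarrow> int ^ 'n \<Rightarrow> real" where
  "lp_dist p x y = (\<Sum>i\<in>UNIV. \<bar>real_of_int (x $ i - y $ i)\<bar> powr p) powr (1 / p)"

definition linf_dist :: "int ^ 'n \<Rightarrow> int ^ 'n \<Rightarrow> real" where
  "linf_dist x y = Max ((\<lambda>i. \<bar>real_of_int (x $ i - y $ i)\<bar>) ` UNIV)"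

definition is_lp_metric_on :: "(int ^ 'n) set \<Rightarrow> (int ^ 'n \<Rightarrow> int ^ 'n \<Rightarrow> real) \<Rightarrow> bool" where
  "is_lp_metric_on X d \<longleftrightarrow>
     (\<exists>p\<ge>1. \<forall>x\<in>X. \<forall>y\<in>X. d x y = lp_dist p x y) \<or> (\<forall>x\<in>X. \<forall>y\<in>X. d x y = linf_dist x y)"

definition Psi_class :: "(real \<Rightarrow> real) \<Rightarrow> bool" where
  "Psi_class \<psi> \<longleftrightarrow>
     (\<forall>t\<ge>0. \<psi> t \<ge> 0) \<and>
     (\<forall>s t. 0 \<le> s \<and> s \<le> t \<longrightarrow> \<psi> s \<le> \<psi> t) \<and>
     (\<forall>t>0. summable (\<lambda>n. (\<psi> ^^ Suc n) t))"

definition alpha_admissible :: "'a set \<Rightarrow> ('a \<Rightarrow> 'a \<Rightarrow> real) \<Rightarrow> ('a \<Rightarrow> 'a) \<Rightarrow> bool" where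
  "alpha_admissible X \<alpha> R \<longleftrightarrow>
     (\<forall>x\<in>X. \<forall>y\<in>X. \<alpha> x y \<ge> 1 \<longrightarrow> \<alpha> (R x) (R y) \<ge> 1)"

definition M_fun :: "('a \<Rightarrow> 'a \<Rightarrow> real) \<Rightarrow> ('a \<Rightarrow> 'a) \<Rightarrow> 'a \<Rightarrow> 'a \<Rightarrow> real" where
  "M_fun d T x y = max (d x y) (max ((d x (T x) + d y (T y)) / 2) ((d x (T y) + d y (T x)) / 2))"

definition gen_alpha_psi_expansive ::
  "'a set \<Rightarrow> ('a \<Rightarrow> 'a \<Rightarrow> real) \<Rightarrow> ('a \<Rightarrow> 'a) \<Rightarrow> ('a \<Rightarrow> 'a \<Rightarrow> real) \<Rightarrow> (real \<Rightarrow> real) \<Rightarrow> bool" where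
  "gen_alpha_psi_expansive X d T \<alpha> \<psi> \<longleftrightarrow>
     (\<forall>x\<in>X. \<forall>y\<in>X. \<alpha> x y \<ge> 0) \<and> Psi_class \<psi> \<and>
     (\<forall>x\<in>X. \<forall>y\<in>X. \<psi> (d (T x) (T y)) \<ge> \<alpha> x y * M_fun d T x y)"

end

theory Submission
  imports Defs
begin

text \<open>Both a finite metric and an \<open>\<ell>\<^sub>p\<close> metric on \<open>\<int>\<^sup>n\<close> are uniformly discrete: distinct
  points are at least some \<open>\<delta> > 0\<close> apart. Let \<open>S = T\<^sup>-\<^sup>1\<close> and \<open>x\<^sub>k = S\<^sup>k x\<^sub>0\<close>. Admissibility of \<open>S\<close>
  propagates \<open>\<alpha>(x\<^sub>k, x\<^sub>k\<^sub>+\<^sub>1) \<ge> 1\<close> along the orbit, and expansiveness of \<open>T\<close> applied to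
  \<open>x\<^sub>k\<^sub>+\<^sub>1, x\<^sub>k\<^sub>+\<^sub>2\<close> gives \<open>d(x\<^sub>k\<^sub>+\<^sub>1, x\<^sub>k\<^sub>+\<^sub>2) \<le> \<psi>(d(x\<^sub>k, x\<^sub>k\<^sub>+\<^sub>1))\<close>, so the consecutive distances are
  bounded by \<open>\<psi>\<^sup>k(d(x\<^sub>0, x\<^sub>1))\<close>, which tends to 0. Hence some consecutive distance is below \<open>\<delta>\<close>,
  i.e. \<open>x\<^sub>k\<^sub>+\<^sub>1 = x\<^sub>k\<close>, and \<open>x\<^sub>k\<close> is fixed by \<open>S\<close> and thus by \<open>T\<close>.\<close>

lemma is_metric_on_nonneg: "is_metric_on X d \<Longrightarrow> x \<in> X \<Longrightarrow> y \<in> X \<Longrightarrow> 0 \<le> d x y"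
  by (simp add: is_metric_on_def)

definition uniformly_discrete :: "'a set \<Rightarrow> ('a \<Rightarrow> 'a \<Rightarrow> real) \<Rightarrow> bool" where
  "uniformly_discrete X d \<longleftrightarrow> (\<exists>\<delta>>0. \<forall>x\<in>X. \<forall>y\<in>X. x \<noteq> y \<longrightarrow> \<delta> \<le> d x y)"

lemma uniformly_discrete_finite:
  assumes "finite X" "is_metric_on X d"
  shows "uniformly_discrete X d"
proof -
  define D where "D = (\<lambda>(x, y). d x y) ` {(x, y) \<in> X \<times> X. x \<noteq> y}"
  have "finite D"
    unfolding D_def using assms(1) by (auto intro: finite_subset[of _ "X \<times> X"])
  have D_pos: "t > 0" if "t \<in> D" for t
    using that assms(2) unfolding D_def is_metric_on_def by (auto simp: order_le_less)
  show ?thesis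
  proof (cases "D = {}")
    case True
    then show ?thesis unfolding uniformly_discrete_def D_def by (intro exI[of _ 1]) auto
  next
    case False
    have "\<forall>x\<in>X. \<forall>y\<in>X. x \<noteq> y \<longrightarrow> Min D \<le> d x y"
      using \<open>finite D\<close> unfolding D_def by (auto intro!: Min_le)
    moreover have "Min D > 0" using \<open>finite D\<close> False D_pos by auto
    ultimately show ?thesis unfolding uniformly_discrete_def by blast
  qed
qed

lemma int_vec_neq_obtains_component:
  fixes x y :: "int ^ 'n"
  assumes "x \<noteq> y"
  obtains i where "1 \<le> \<bar>real_of_int (x $ i - y $ i)\<bar>"
proof -
  obtain i where "x $ i \<noteq> y $ i" using assms by (metis vec_eq_iff)
  then have "1 \<le> \<bar>x $ i - y $ i\<bar>" by linarith
  then have "1 \<le> \<bar>real_of_int (x $ i - y $ i)\<bar>" by (metis of_int_abs of_int_le_iff of_int_1)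
  then show thesis by (rule that)
qed

lemma lp_dist_ge_1:
  fixes x y :: "int ^ 'n"
  assumes "1 \<le> p" "x \<noteq> y"
  shows "1 \<le> lp_dist p x y"
proof -
  obtain i where i: "1 \<le> \<bar>real_of_int (x $ i - y $ i)\<bar>"
    using assms(2) by (rule int_vec_neq_obtains_component)
  have "1 \<le> \<bar>real_of_int (x $ i - y $ i)\<bar> powr p"
    using i assms(1) by (intro ge_one_powr_ge_zero) auto
  also have "\<dots> \<le> (\<Sum>j\<in>UNIV. \<bar>real_of_int (x $ j - y $ j)\<bar> powr p)"
    by (rule member_le_sum) auto
  finally show ?thesis
    unfolding lp_dist_def using assms(1) by (intro ge_one_powr_ge_zero) auto
qed

lemma linf_dist_ge_1:
  fixes x y :: "int ^ 'n"
  assumes "x \<noteq> y"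
  shows "1 \<le> linf_dist x y"
proof -
  obtain i where "1 \<le> \<bar>real_of_int (x $ i - y $ i)\<bar>"
    using assms by (rule int_vec_neq_obtains_component)
  also have "\<dots> \<le> linf_dist x y"
    unfolding linf_dist_def by (rule Max_ge) auto
  finally show ?thesis .
qed

lemma uniformly_discrete_lp_metric:
  assumes "is_lp_metric_on X d"
  shows "uniformly_discrete X d"
proof -
  have "\<forall>x\<in>X. \<forall>y\<in>X. x \<noteq> y \<longrightarrow> 1 \<le> d x y"
    using assms lp_dist_ge_1 linf_dist_ge_1 unfolding is_lp_metric_on_def by metis
  then show ?thesis unfolding uniformly_discrete_def by (intro exI[of _ 1]) auto
qed

lemma funpow_mem_of_image_subset:
  assumes "f ` A \<subseteq> A" "x \<in> A"
  shows "(f ^^ n) x \<in> A"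
  by (induction n) (use assms in auto)

lemma uniformly_discrete_orbit_fixed_point:
  assumes "is_metric_on X d" "uniformly_discrete X d" "S ` X \<subseteq> X" "x0 \<in> X"
    and "(\<lambda>n. d ((S ^^ n) x0) ((S ^^ Suc n) x0)) \<longlonglongrightarrow> 0"
  shows "\<exists>x\<in>X. S x = x"
proof -
  obtain \<delta> where "\<delta> > 0" and \<delta>: "\<forall>x\<in>X. \<forall>y\<in>X. x \<noteq> y \<longrightarrow> \<delta> \<le> d x y"
    using assms(2) unfolding uniformly_discrete_def by blast
  have orbit: "(S ^^ n) x0 \<in> X" for n
    using assms(3,4) by (rule funpow_mem_of_image_subset)
  obtain N where "\<bar>d ((S ^^ N) x0) ((S ^^ Suc N) x0)\<bar> < \<delta>"
    using LIMSEQ_D[OF assms(5) \<open>\<delta> > 0\<close>] by auto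
  then have "\<not> \<delta> \<le> d ((S ^^ N) x0) ((S ^^ Suc N) x0)" by linarith
  then have "(S ^^ N) x0 = (S ^^ Suc N) x0"
    using \<delta> orbit by blast
  then show ?thesis using orbit by (metis funpow.simps(2) o_apply)
qed

lemma Psi_class_nonneg: "Psi_class \<psi> \<Longrightarrow> 0 \<le> t \<Longrightarrow> 0 \<le> \<psi> t"
  unfolding Psi_class_def by blast

lemma Psi_class_mono: "Psi_class \<psi> \<Longrightarrow> 0 \<le> s \<Longrightarrow> s \<le> t \<Longrightarrow> \<psi> s \<le> \<psi> t"
  unfolding Psi_class_def by blast

lemma Psi_class_funpow_nonneg:
  assumes "Psi_class \<psi>" "0 \<le> t"
  shows "0 \<le> (\<psi> ^^ n) t"
  by (induction n) (simp_all add: assms Psi_class_nonneg)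

lemma Psi_class_funpow_mono:
  assumes "Psi_class \<psi>" "0 \<le> s" "s \<le> t"
  shows "(\<psi> ^^ n) s \<le> (\<psi> ^^ n) t"
  by (induction n) (simp_all add: assms Psi_class_mono Psi_class_funpow_nonneg)

lemma Psi_class_funpow_tendsto_0:
  assumes "Psi_class \<psi>" "0 \<le> t"
  shows "(\<lambda>n. (\<psi> ^^ n) t) \<longlonglongrightarrow> 0"
proof -
  define u where "u = max t 1"
  have "0 < u" "t \<le> u" unfolding u_def by auto
  then have "summable (\<lambda>n. (\<psi> ^^ Suc n) u)"
    using assms(1) unfolding Psi_class_def by blast
  then have "(\<lambda>n. (\<psi> ^^ Suc n) u) \<longlonglongrightarrow> 0" by (rule summable_LIMSEQ_zero)
  then have lim: "(\<lambda>n. (\<psi> ^^ n) u) \<longlonglongrightarrow> 0" by (rule LIMSEQ_imp_Suc)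
  have "\<forall>\<^sub>F n in sequentially. 0 \<le> (\<psi> ^^ n) t"
    by (intro always_eventually allI Psi_class_funpow_nonneg assms)
  moreover have "\<forall>\<^sub>F n in sequentially. (\<psi> ^^ n) t \<le> (\<psi> ^^ n) u"
    by (intro always_eventually allI Psi_class_funpow_mono assms \<open>t \<le> u\<close>)
  ultimately show ?thesis
    using tendsto_const lim by (rule tendsto_sandwich)
qed

lemma Psi_class_recurrence_bound:
  assumes "Psi_class \<psi>" "\<And>n. 0 \<le> a n" "\<And>n. a (Suc n) \<le> \<psi> (a n)"
  shows "a n \<le> (\<psi> ^^ n) (a 0)"
proof (induction n)
  case (Suc n)
  have "a (Suc n) \<le> \<psi> (a n)" by (rule assms(3))
  also have "\<dots> \<le> \<psi> ((\<psi> ^^ n) (a 0))"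
    using assms(1,2) Suc by (rule Psi_class_mono)
  finally show ?case by simp
qed simp

lemma gen_alpha_psi_expansive_dist_le:
  assumes "gen_alpha_psi_expansive X d T \<alpha> \<psi>" "is_metric_on X d"
    and "x \<in> X" "y \<in> X" "1 \<le> \<alpha> x y"
  shows "d x y \<le> \<psi> (d (T x) (T y))"
proof -
  have "d x y \<le> M_fun d T x y" unfolding M_fun_def by (rule max.cobounded1)
  then have "d x y \<le> \<alpha> x y * M_fun d T x y"
    using assms(5) is_metric_on_nonneg[OF assms(2-4)] by (metis mult_right_mono mult_1 order_trans)
  also have "\<dots> \<le> \<psi> (d (T x) (T y))"
    using assms(1,3,4) by (simp add: gen_alpha_psi_expansive_def)
  finally show ?thesis .
qed

lemma alpha_admissible_orbit:
  assumes "alpha_admissible X \<alpha> S" "S ` X \<subseteq> X" "x0 \<in> X" "1 \<le> \<alpha> x0 (S x0)"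
  shows "1 \<le> \<alpha> ((S ^^ n) x0) ((S ^^ Suc n) x0)"
proof (induction n)
  case (Suc n)
  have "(S ^^ n) x0 \<in> X" "(S ^^ Suc n) x0 \<in> X"
    using assms(2,3) by (simp_all only: funpow_mem_of_image_subset)
  with Suc assms(1) show ?case
    unfolding alpha_admissible_def funpow.simps(2) o_apply by blast
qed (use assms(4) in simp)

lemma expansive_inverse_orbit_dist_tendsto_0:
  assumes "gen_alpha_psi_expansive X d T \<alpha> \<psi>" "is_metric_on X d"
    and "alpha_admissible X \<alpha> S" "S ` X \<subseteq> X" "\<And>x. x \<in> X \<Longrightarrow> T (S x) = x"
    and "x0 \<in> X" "1 \<le> \<alpha> x0 (S x0)"
  shows "(\<lambda>n. d ((S ^^ n) x0) ((S ^^ Suc n) x0)) \<longlonglongrightarrow> 0"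
proof -
  define a where "a n = d ((S ^^ n) x0) ((S ^^ Suc n) x0)" for n
  have psi: "Psi_class \<psi>" using assms(1) by (simp add: gen_alpha_psi_expansive_def)
  have orbit: "(S ^^ n) x0 \<in> X" for n using assms(4,6) by (rule funpow_mem_of_image_subset)
  have a_nonneg: "0 \<le> a n" for n unfolding a_def
    using assms(2) orbit[of n] orbit[of "Suc n"] by (rule is_metric_on_nonneg)
  have a_step: "a (Suc n) \<le> \<psi> (a n)" for n
  proof -
    let ?y = "(S ^^ Suc n) x0"
    have "d ?y (S ?y) \<le> \<psi> (d (T ?y) (T (S ?y)))"
      using alpha_admissible_orbit[OF assms(3,4,6,7), of "Suc n"] orbit[of "Suc n"] orbit[of "Suc (Suc n)"]
      by (intro gen_alpha_psi_expansive_dist_le[OF assms(1,2)]) simp_all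
    then show ?thesis using assms(5) orbit[of n] orbit[of "Suc n"] by (simp add: a_def)
  qed
  have a_bound: "a n \<le> (\<psi> ^^ n) (a 0)" for n
    using psi a_nonneg a_step by (rule Psi_class_recurrence_bound)
  have "a \<longlonglongrightarrow> 0"
  proof (rule tendsto_sandwich[OF _ _ tendsto_const])
    show "\<forall>\<^sub>F n in sequentially. 0 \<le> a n" using a_nonneg by simp
    show "\<forall>\<^sub>F n in sequentially. a n \<le> (\<psi> ^^ n) (a 0)" using a_bound by simp
  qed (rule Psi_class_funpow_tendsto_0[OF psi a_nonneg])
  then show ?thesis unfolding a_def[abs_def] .
qed

theorem theorem4p9:
  fixes X :: "(int ^ 'n) set"
    and d :: "int ^ 'n \<Rightarrow> int ^ 'n \<Rightarrow> real"
    and \<kappa> :: "int ^ 'n \<Rightarrow> int ^ 'n \<Rightarrow> bool"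
    and T :: "int ^ 'n \<Rightarrow> int ^ 'n"
    and \<alpha> :: "int ^ 'n \<Rightarrow> int ^ 'n \<Rightarrow> real"
    and \<psi> :: "real \<Rightarrow> real"
  assumes "digital_metric_space X d \<kappa>"
    and "d_complete X d"
    and "finite X \<or> is_lp_metric_on X d"
    and "bij_betw T X X"
    and "gen_alpha_psi_expansive X d T \<alpha> \<psi>"
    and "alpha_admissible X \<alpha> (inv_into X T)"
    and "\<exists>x0\<in>X. \<alpha> x0 (inv_into X T x0) \<ge> 1"
  shows "\<exists>x\<in>X. T x = x"
proof -
  define S where "S = inv_into X T"
  have metric: "is_metric_on X d" using assms(1) by (simp add: digital_metric_space_def)
  have S_into: "S ` X \<subseteq> X" and T_S: "\<And>x. x \<in> X \<Longrightarrow> T (S x) = x"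
    using assms(4) unfolding S_def bij_betw_def by (auto simp: inv_into_into f_inv_into_f)
  obtain x0 where "x0 \<in> X" "1 \<le> \<alpha> x0 (S x0)" using assms(7) S_def by auto
  have "uniformly_discrete X d"
    using assms(3) metric uniformly_discrete_finite uniformly_discrete_lp_metric by blast
  moreover have "(\<lambda>n. d ((S ^^ n) x0) ((S ^^ Suc n) x0)) \<longlonglongrightarrow> 0"
    using assms(5) metric assms(6)[folded S_def] S_into T_S \<open>x0 \<in> X\<close> \<open>1 \<le> \<alpha> x0 (S x0)\<close>
    by (rule expansive_inverse_orbit_dist_tendsto_0)
  ultimately obtain x where "x \<in> X" "S x = x"
    using uniformly_discrete_orbit_fixed_point[OF metric _ S_into \<open>x0 \<in> X\<close>] by blast
  then show ?thesis using T_S by metis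
qed

end
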